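(* Let $\mathcal{G}$ be a multi-layer graph with $l$ layers, $d,k\in\mathbb{N}$ with $k\ge1$, and $\mathcal{R}$ a collection of exactly $k$ subsets of $V(\mathcal{G})$. Let $L\subseteq\{1,\dots,l\}$ and $j>\max(L)$. If $|\mathsf{Cov}((\mathcal{R}-\{C^*(\mathcal{R})\})\cup\{C^d_{L\cup\{j\}}(\mathcal{G})\})|<(1+\frac1k)|\mathsf{Cov}(\mathcal{R})|$, then for every $L'$ with $L\subseteq L'\subseteq\{1,\dots,l\}$, $|\mathsf{Cov}((\mathcal{R}-\{C^*(\mathcal{R})\})\cup\{C^d_{L'\cup\{j\}}(\mathcal{G})\})|<(1+\frac1k)|\mathsf{Cov}(\mathcal{R})|$.
   Context: A multi-layer graph $\mathcal{G}=(V,E_1,\dots,E_l)$ consists of a finite vertex set $V$ and edge sets $E_i$ of simple undirected graphs $G_i=(V,E_i)$. A graph is $d$-dense if every vertex has degree at least $d$; the $d$-coherent core $C^d_L(\mathcal{G})$ is the unique maximal $S\subseteq V$ such that the induced subgraph $G_i[S]$ is $d$-dense for all $i\in L$. $\max(\emptyset)=-\infty$. For a collection $\mathcal{R}$ of sets, $\mathsf{Cov}(\mathcal{R})=\bigcup_{R\in\mathcal{R}}R$; for $C'\in\mathcal{R}$, $\Delta(\mathcal{R},C')=C'-\mathsf{Cov}(\mathcal{R}-\{C'\})$; $C^*(\mathcal{R})$ is a fixed element of $\mathcal{R}$ minimizing $|\Delta(\mathcal{R},C')|$. *)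

theory Defs
  imports Complex_Main
begin

definition multilayer_graph :: "'v set \<Rightarrow> nat \<Rightarrow> (nat \<Rightarrow> 'v set set) \<Rightarrow> bool" where
  "multilayer_graph V l E \<longleftrightarrow> finite V \<and>
     (\<forall>i\<in>{1..l}. \<forall>e\<in>E i. e \<subseteq> V \<and> card e = 2)"

definition induced_degree :: "'v set set \<Rightarrow> 'v set \<Rightarrow> 'v \<Rightarrow> nat" where
  "induced_degree Ei S v = card {u \<in> S. {v, u} \<in> Ei}"

definition dense_induced :: "nat \<Rightarrow> 'v set set \<Rightarrow> 'v set \<Rightarrow> bool" where
  "dense_induced d Ei S \<longleftrightarrow> (\<forall>v\<in>S. induced_degree Ei S v \<ge> d)"

definition coherent_core :: "'v set \<Rightarrow> (nat \<Rightarrow> 'v set set) \<Rightarrow> nat \<Rightarrow> nat set \<Rightarrow> 'v set" where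
  "coherent_core V E d L = (GREATEST S. S \<subseteq> V \<and> (\<forall>i\<in>L. dense_induced d (E i) S))"

definition Cov :: "'v set set \<Rightarrow> 'v set" where
  "Cov R = \<Union>R"

definition Delta :: "'v set set \<Rightarrow> 'v set \<Rightarrow> 'v set" where
  "Delta R C' = C' - Cov (R - {C'})"

definition Cstar :: "'v set set \<Rightarrow> 'v set" where
  "Cstar R = (SOME C. C \<in> R \<and> (\<forall>C'\<in>R. card (Delta R C) \<le> card (Delta R C')))"

end

theory Submission
  imports Defs
begin

text \<open>Induced degrees grow with the vertex set, so a union of d-dense sets is d-dense.
  Hence the coherent core is the union of all admissible sets, and it shrinks when layers
  are added. Replacing the core for L \<union> {j} by the smaller core for L' \<union> {j} can therefore
  only shrink the cover, and the strict bound carries over.\<close>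

lemma induced_degree_mono:
  assumes "S \<subseteq> T" "finite T"
  shows "induced_degree Ei S v \<le> induced_degree Ei T v"
  unfolding induced_degree_def
  by (rule card_mono) (use assms in \<open>auto intro: finite_subset\<close>)

lemma dense_induced_Union:
  assumes "finite (\<Union>\<F>)" "\<forall>S\<in>\<F>. dense_induced d Ei S"
  shows "dense_induced d Ei (\<Union>\<F>)"
  unfolding dense_induced_def
proof
  fix v assume "v \<in> \<Union>\<F>"
  then obtain S where S: "S \<in> \<F>" "v \<in> S" by blast
  then have "d \<le> induced_degree Ei S v" using assms(2) by (auto simp: dense_induced_def)
  also have "\<dots> \<le> induced_degree Ei (\<Union>\<F>) v"
    using S(1) assms(1) by (intro induced_degree_mono) auto
  finally show "d \<le> induced_degree Ei (\<Union>\<F>) v" .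
qed

lemma coherent_core_eq_Union:
  assumes "finite V"
  shows "coherent_core V E d L = \<Union>{S. S \<subseteq> V \<and> (\<forall>i\<in>L. dense_induced d (E i) S)}"
  unfolding coherent_core_def
proof (rule Greatest_equality)
  let ?\<F> = "{S. S \<subseteq> V \<and> (\<forall>i\<in>L. dense_induced d (E i) S)}"
  have "finite (\<Union>?\<F>)" by (rule finite_subset[OF _ assms]) blast
  then show "\<Union>?\<F> \<subseteq> V \<and> (\<forall>i\<in>L. dense_induced d (E i) (\<Union>?\<F>))"
    by (auto intro: dense_induced_Union)
qed auto

lemma coherent_core_subset:
  assumes "finite V"
  shows "coherent_core V E d L \<subseteq> V"
  using assms by (auto simp: coherent_core_eq_Union)

lemma coherent_core_antimono:
  assumes "finite V" "L \<subseteq> L'"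
  shows "coherent_core V E d L' \<subseteq> coherent_core V E d L"
  using assms by (auto simp: coherent_core_eq_Union)

lemma card_Cov_replace_mono:
  assumes "A \<subseteq> B" "finite (Cov (\<R> \<union> {B}))"
  shows "card (Cov (\<R> \<union> {A})) \<le> card (Cov (\<R> \<union> {B}))"
  using assms by (intro card_mono) (auto simp: Cov_def)

theorem lemma4:
  fixes V :: "'v set" and l :: nat and E :: "nat \<Rightarrow> 'v set set"
    and d k j :: nat and R :: "'v set set" and L :: "nat set"
  assumes G: "multilayer_graph V l E"
    and k: "k \<ge> 1"
    and R: "card R = k" "\<forall>C\<in>R. C \<subseteq> V"
    and L: "L \<subseteq> {1..l}"
    and j: "j \<in> {1..l}" "\<forall>i\<in>L. i < j"
    and hyp: "real (card (Cov ((R - {Cstar R}) \<union> {coherent_core V E d (L \<union> {j})})))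
              < (1 + 1 / real k) * real (card (Cov R))"
  shows "\<forall>L'. L \<subseteq> L' \<and> L' \<subseteq> {1..l} \<longrightarrow>
           real (card (Cov ((R - {Cstar R}) \<union> {coherent_core V E d (L' \<union> {j})})))
              < (1 + 1 / real k) * real (card (Cov R))"
proof (intro allI impI)
  fix L' assume "L \<subseteq> L' \<and> L' \<subseteq> {1..l}"
  have fin: "finite V" using G by (simp add: multilayer_graph_def)
  let ?R = "R - {Cstar R}" and ?core = "\<lambda>M. coherent_core V E d (M \<union> {j})"
  have "?core L' \<subseteq> ?core L"
    using fin \<open>L \<subseteq> L' \<and> L' \<subseteq> {1..l}\<close> by (intro coherent_core_antimono) auto
  moreover have "Cov (?R \<union> {?core L}) \<subseteq> V"
    using R(2) coherent_core_subset[OF fin] by (auto simp: Cov_def)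
  then have "finite (Cov (?R \<union> {?core L}))" using fin by (rule finite_subset)
  ultimately have "card (Cov (?R \<union> {?core L'})) \<le> card (Cov (?R \<union> {?core L}))"
    by (rule card_Cov_replace_mono)
  then show "real (card (Cov (?R \<union> {?core L'}))) < (1 + 1 / real k) * real (card (Cov R))"
    using hyp by linarith
qed

end
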